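(* Let $k$ be a nonperfect field of characteristic $2$, let $a\in k\setminus k^2$, let $G=PGL_2$ and, writing $\bar A$ for the image in $PGL_2$ of $A\in GL_2$, let $u=\overline{\begin{pmatrix}0&a\\1&0\end{pmatrix}}\in G(k)$ and $U=\langle u\rangle$. Then $U$ is $G$-irreducible over $k$ (in particular $G$-completely reducible over $k$), but $U$ is not $G$-completely reducible.
   Context: For a connected reductive $k$-group $G$, a closed subgroup $H$ is $G$-completely reducible over $k$ if whenever $H$ is contained in a $k$-parabolic subgroup $P$ of $G$, $H$ is contained in some $k$-Levi subgroup of $P$; $H$ is $G$-irreducible over $k$ if it lies in no proper $k$-parabolic subgroup. "$G$-completely reducible" means $G$-completely reducible over $\bar k$. *)

theory Defs
  imports "HOL-Analysis.Analysis" "HOL-Computational_Algebra.Polynomial"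
begin

type_synonym 'a mat2 = "'a^2^2"

definition is_subfield :: "'a::field set \<Rightarrow> bool" where
  "is_subfield F \<longleftrightarrow> 0 \<in> F \<and> 1 \<in> F \<and>
     (\<forall>x\<in>F. \<forall>y\<in>F. x + y \<in> F \<and> x * y \<in> F) \<and>
     (\<forall>x\<in>F. - x \<in> F \<and> inverse x \<in> F)"

definition algebraic_over :: "'a::field set \<Rightarrow> 'a \<Rightarrow> bool" where
  "algebraic_over F x \<longleftrightarrow> (\<exists>p::'a poly. p \<noteq> 0 \<and> (\<forall>i. coeff p i \<in> F) \<and> poly p x = 0)"

definition mat2 :: "'a \<Rightarrow> 'a \<Rightarrow> 'a \<Rightarrow> 'a \<Rightarrow> 'a mat2" where
  "mat2 a b c d = (\<chi> i j. if i = 1 then (if j = 1 then a else b) else (if j = 1 then c else d))"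

definition GL2 :: "'a::field set \<Rightarrow> 'a mat2 set" where
  "GL2 F = {A. (\<forall>i j. A $ i $ j \<in> F) \<and> det A \<noteq> 0}"

definition pgl_class :: "'a::field mat2 \<Rightarrow> 'a mat2 set" where
  "pgl_class A = {B. \<exists>c. c \<noteq> 0 \<and> B = (\<chi> i j. c * A $ i $ j)}"

definition PGL2 :: "'a::field mat2 set set" where
  "PGL2 = pgl_class ` GL2 UNIV"

definition pgl_mult :: "'a::field mat2 set \<Rightarrow> 'a mat2 set \<Rightarrow> 'a mat2 set" where
  "pgl_mult X Y = {A ** B | A B. A \<in> X \<and> B \<in> Y}"

definition pgl_inv :: "'a::field mat2 set \<Rightarrow> 'a mat2 set" where
  "pgl_inv X = {B. \<exists>A\<in>X. A ** B = mat 1}"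

definition pgl_one :: "'a::field mat2 set" where
  "pgl_one = pgl_class (mat 1)"

definition pgl_subgroup :: "'a::field mat2 set set \<Rightarrow> bool" where
  "pgl_subgroup H \<longleftrightarrow> H \<subseteq> PGL2 \<and> pgl_one \<in> H \<and>
     (\<forall>X\<in>H. \<forall>Y\<in>H. pgl_mult X Y \<in> H) \<and> (\<forall>X\<in>H. pgl_inv X \<in> H)"

definition pgl_generated :: "'a::field mat2 set set \<Rightarrow> 'a mat2 set set" where
  "pgl_generated S = \<Inter>{H. pgl_subgroup H \<and> S \<subseteq> H}"

definition Borel2 :: "'a::field mat2 set" where
  "Borel2 = {A \<in> GL2 UNIV. A $ 2 $ 1 = 0}"

definition Torus2 :: "'a::field mat2 set" where
  "Torus2 = {A \<in> GL2 UNIV. A $ 2 $ 1 = 0 \<and> A $ 1 $ 2 = 0}"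

text \<open>Conjugate g S g^{-1} (for invertible g).\<close>
definition conj2 :: "'a::field mat2 \<Rightarrow> 'a mat2 set \<Rightarrow> 'a mat2 set" where
  "conj2 g S = {A. \<exists>s\<in>S. A ** g = g ** s}"

text \<open>F-parabolic subgroups of PGL_2: G itself, or the image of a Borel subgroup
  g B g^{-1} with g in GL_2(F) (i.e. an F-Borel subgroup).\<close>
definition parabolic_over :: "'a::field set \<Rightarrow> 'a mat2 set set \<Rightarrow> bool" where
  "parabolic_over F P \<longleftrightarrow> P = PGL2 \<or> (\<exists>g\<in>GL2 F. P = pgl_class ` conj2 g Borel2)"

text \<open>F-Levi subgroups of an F-parabolic P: G is its own Levi; the F-Levi subgroups of
  an F-Borel subgroup are its maximal tori defined over F, i.e. the images of
  h T h^{-1} with h in GL_2(F) contained in P.\<close>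
definition levi_over :: "'a::field set \<Rightarrow> 'a mat2 set set \<Rightarrow> 'a mat2 set set \<Rightarrow> bool" where
  "levi_over F P L \<longleftrightarrow>
     (P = PGL2 \<and> L = PGL2) \<or>
     (P \<noteq> PGL2 \<and> (\<exists>h\<in>GL2 F. L = pgl_class ` conj2 h Torus2 \<and> L \<subseteq> P))"

definition cr_over :: "'a::field set \<Rightarrow> 'a mat2 set set \<Rightarrow> bool" where
  "cr_over F H \<longleftrightarrow> (\<forall>P. parabolic_over F P \<and> H \<subseteq> P \<longrightarrow> (\<exists>L. levi_over F P L \<and> H \<subseteq> L))"

definition irreducible_over :: "'a::field set \<Rightarrow> 'a mat2 set set \<Rightarrow> bool" where
  "irreducible_over F H \<longleftrightarrow> (\<forall>P. parabolic_over F P \<and> H \<subseteq> P \<longrightarrow> P = PGL2)"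

text \<open>G-complete reducibility = complete reducibility over the algebraically closed field.\<close>
definition completely_reducible :: "'a::alg_closed_field mat2 set set \<Rightarrow> bool" where
  "completely_reducible H \<longleftrightarrow> cr_over UNIV H"

end

theory Submission
  imports Defs
begin

text \<open>Since \<open>u\<^sup>2 = a\<close> is scalar, \<open>U = {1, u}\<close>. If \<open>u\<close> lies in a Borel subgroup
  \<open>g B g\<^sup>-\<^sup>1\<close>, the first column of \<open>g\<close> is an eigenvector of \<open>u\<close> whose eigenvalue
  \<open>t = g\<^sub>1\<^sub>1 / g\<^sub>2\<^sub>1\<close> satisfies \<open>t\<^sup>2 = a\<close>; for \<open>g\<close> over \<open>k\<close> no such \<open>t\<close> exists, so \<open>U\<close> is
  \<open>G\<close>-irreducible over \<open>k\<close>. Over the algebraically closed field, \<open>b = \<surd>a\<close> gives the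
  eigenvector \<open>(b, 1)\<close>, so \<open>U\<close> lies in a proper Borel subgroup; but a maximal torus
  \<open>h T h\<^sup>-\<^sup>1\<close> containing \<open>u\<close> would make both columns of \<open>h\<close> eigenvectors, and in
  characteristic 2 the equation \<open>t\<^sup>2 = a\<close> has only one root, so the columns would be
  proportional.\<close>

definition smult_mat :: "'a::times \<Rightarrow> 'a^'n^'m \<Rightarrow> 'a^'n^'m" where
  "smult_mat c A = (\<chi> i j. c * A $ i $ j)"

lemma smult_mat_nth [simp]: "smult_mat c A $ i $ j = c * A $ i $ j"
  by (simp add: smult_mat_def)

lemma smult_mat_1 [simp]: "smult_mat 1 (A::'a::monoid_mult^'n^'m) = A"
  by (simp add: vec_eq_iff)

lemma smult_mat_smult_mat [simp]:
  "smult_mat c (smult_mat d A) = smult_mat (c * d) (A::'a::semigroup_mult^'n^'m)"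
  by (simp add: vec_eq_iff mult.assoc)

lemma smult_mat_matrix_mult [simp]:
  fixes A :: "'a::comm_semiring_1^'n^'m"
  shows "smult_mat c A ** B = smult_mat c (A ** B)"
  by (simp add: vec_eq_iff matrix_matrix_mult_def sum_distrib_left mult_ac)

lemma matrix_mult_smult_mat [simp]:
  fixes A :: "'a::comm_semiring_1^'n^'m"
  shows "A ** smult_mat c B = smult_mat c (A ** B)"
  by (simp add: vec_eq_iff matrix_matrix_mult_def sum_distrib_left mult_ac)

lemma mat2_nth [simp]:
  "mat2 a b c d $ 1 $ 1 = a" "mat2 a b c d $ 1 $ 2 = b"
  "mat2 a b c d $ 2 $ 1 = c" "mat2 a b c d $ 2 $ 2 = d"
  by (simp_all add: mat2_def)

lemma mat2_cases: obtains p q r s where "A = mat2 p q r s"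
proof
  show "A = mat2 (A$1$1) (A$1$2) (A$2$1) (A$2$2)"
    by (auto simp: mat2_def vec_eq_iff forall_2)
qed

lemma mat2_eq_iff:
  "mat2 a b c d = mat2 a' b' c' d' \<longleftrightarrow> a = a' \<and> b = b' \<and> c = c' \<and> d = d'"
  by (metis mat2_nth)

lemma mat2_mult:
  "mat2 a b c d ** mat2 e f g h = mat2 (a*e + b*g) (a*f + b*h) (c*e + d*g) (c*f + d*h)"
  by (simp add: mat2_def matrix_matrix_mult_def vec_eq_iff sum_2)

lemma mat2_matrix_mult_nth [simp]:
  "(mat2 p q r s ** B) $ 1 $ j = p * B $ 1 $ j + q * B $ 2 $ j"
  "(mat2 p q r s ** B) $ 2 $ j = r * B $ 1 $ j + s * B $ 2 $ j"
  by (simp_all add: matrix_matrix_mult_def sum_2)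

lemma det_mat2: "det (mat2 a b c (d::'a::comm_ring_1)) = a*d - b*c"
  by (simp add: det_2)

lemma smult_mat_mat2: "smult_mat e (mat2 a b c d) = mat2 (e*a) (e*b) (e*c) (e*d)"
  by (simp add: mat2_def vec_eq_iff)

lemma mat_1_eq_mat2: "mat 1 = mat2 1 0 0 1"
  by (simp add: vec_eq_iff forall_2 mat_def)

lemma pgl_class_alt_def: "pgl_class A = {B. \<exists>c. c \<noteq> 0 \<and> B = smult_mat c A}"
  by (simp add: pgl_class_def smult_mat_def)

lemma pgl_class_smult_mat [simp]: "c \<noteq> 0 \<Longrightarrow> pgl_class (smult_mat c A) = pgl_class A"
  unfolding pgl_class_alt_def
  by (auto intro: exI[of _ "_ * c"] exI[of _ "_ / c"])

lemma in_pgl_class_self: "A \<in> pgl_class A"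
  unfolding pgl_class_alt_def by (auto intro: exI[of _ 1])

lemma pgl_class_eqD: "pgl_class A = pgl_class B \<Longrightarrow> \<exists>c. c \<noteq> 0 \<and> A = smult_mat c B"
  using in_pgl_class_self[of A] unfolding pgl_class_alt_def by auto

lemma pgl_class_in_PGL2: "det A \<noteq> 0 \<Longrightarrow> pgl_class A \<in> PGL2"
  unfolding PGL2_def GL2_def by auto

lemma pgl_mult_pgl_class: "pgl_mult (pgl_class A) (pgl_class B) = pgl_class (A ** B)"
proof (intro set_eqI iffI)
  fix Z assume "Z \<in> pgl_mult (pgl_class A) (pgl_class B)"
  then obtain c d where "c \<noteq> 0" "d \<noteq> 0" "Z = smult_mat c A ** smult_mat d B"
    unfolding pgl_mult_def pgl_class_alt_def by blast
  then have "Z = smult_mat (c * d) (A ** B)" and "c * d \<noteq> 0"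
    by (simp_all add: mult.commute)
  then show "Z \<in> pgl_class (A ** B)"
    unfolding pgl_class_alt_def by blast
next
  fix Z assume "Z \<in> pgl_class (A ** B)"
  then obtain c where c: "c \<noteq> 0" "Z = smult_mat c (A ** B)"
    unfolding pgl_class_alt_def by blast
  then have "Z = smult_mat c A ** B" and "smult_mat c A \<in> pgl_class A"
    unfolding pgl_class_alt_def by auto
  then show "Z \<in> pgl_mult (pgl_class A) (pgl_class B)"
    unfolding pgl_mult_def using in_pgl_class_self by blast
qed

lemma pgl_inv_pgl_class:
  fixes A B :: "'a::field mat2"
  assumes "A ** B = mat 1"
  shows "pgl_inv (pgl_class A) = pgl_class B"
proof (intro set_eqI iffI)
  have BA: "B ** A = mat 1"
    using assms by (simp add: matrix_left_right_inverse)
  fix X assume "X \<in> pgl_inv (pgl_class A)"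
  then obtain c where c: "c \<noteq> 0" "smult_mat c A ** X = mat 1"
    unfolding pgl_inv_def pgl_class_alt_def by blast
  have "smult_mat c X = B"
    using arg_cong[OF c(2), of "(**) B"] by (simp add: matrix_mul_assoc BA)
  then have "X = smult_mat (1 / c) B"
    using c(1) by auto
  moreover have "1 / c \<noteq> 0"
    using c(1) by simp
  ultimately show "X \<in> pgl_class B"
    unfolding pgl_class_alt_def by blast
next
  fix X assume "X \<in> pgl_class B"
  then obtain c where c: "c \<noteq> 0" "X = smult_mat c B"
    unfolding pgl_class_alt_def by blast
  then have "smult_mat (1 / c) A ** X = mat 1"
    by (simp add: assms)
  moreover have "smult_mat (1 / c) A \<in> pgl_class A"
    using c(1) unfolding pgl_class_alt_def by (auto intro!: exI[of _ "1 / c"])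
  ultimately show "X \<in> pgl_inv (pgl_class A)"
    unfolding pgl_inv_def by blast
qed

lemma antidiag_squared:
  "mat2 0 a 1 0 ** mat2 0 a 1 0 = smult_mat a (mat 1 :: 'a::comm_ring_1 mat2)"
  by (simp add: mat2_mult smult_mat_mat2 mat_1_eq_mat2)

lemma pgl_subgroup_involution:
  fixes A :: "'a::field mat2"
  assumes "A ** A = smult_mat c (mat 1)" and "c \<noteq> 0"
  shows "pgl_subgroup {pgl_one, pgl_class A}"
proof -
  let ?u = "pgl_class A"
  have inverse: "A ** smult_mat (1 / c) A = mat 1"
    using assms by simp
  then have "det A * det (smult_mat (1 / c) A) = 1"
    by (metis det_I det_mul)
  then have "{pgl_one, ?u} \<subseteq> PGL2"
    unfolding pgl_one_def by (auto intro: pgl_class_in_PGL2)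
  moreover have "pgl_mult pgl_one pgl_one = pgl_one" "pgl_mult pgl_one ?u = ?u"
    "pgl_mult ?u pgl_one = ?u" "pgl_mult ?u ?u = pgl_one"
    using assms by (simp_all add: pgl_one_def pgl_mult_pgl_class)
  moreover have "pgl_inv pgl_one = pgl_one"
    unfolding pgl_one_def by (simp add: pgl_inv_pgl_class)
  moreover have "pgl_inv ?u = ?u"
    using pgl_inv_pgl_class[OF inverse] assms(2) by simp
  ultimately show ?thesis
    unfolding pgl_subgroup_def by auto
qed

lemma pgl_generated_involution:
  fixes A :: "'a::field mat2"
  assumes "A ** A = smult_mat c (mat 1)" and "c \<noteq> 0"
  shows "pgl_generated {pgl_class A} = {pgl_one, pgl_class A}"
proof
  show "pgl_generated {pgl_class A} \<subseteq> {pgl_one, pgl_class A}"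
    using pgl_subgroup_involution[OF assms] unfolding pgl_generated_def by blast
  show "{pgl_one, pgl_class A} \<subseteq> pgl_generated {pgl_class A}"
    unfolding pgl_generated_def pgl_subgroup_def by blast
qed

lemma irreducible_overI:
  assumes "\<And>g. g \<in> GL2 F \<Longrightarrow> \<not> H \<subseteq> pgl_class ` conj2 g Borel2"
  shows "irreducible_over F H"
  unfolding irreducible_over_def
proof (intro allI impI)
  fix P assume "parabolic_over F P \<and> H \<subseteq> P"
  then show "P = PGL2"
    using assms unfolding parabolic_over_def by blast
qed

lemma irreducible_imp_cr_over:
  assumes "H \<subseteq> PGL2" and "irreducible_over F H"
  shows "cr_over F H"
  unfolding cr_over_def
proof (intro allI impI)
  fix P assume "parabolic_over F P \<and> H \<subseteq> P"
  then have "P = PGL2"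
    using assms(2) unfolding irreducible_over_def by blast
  then show "\<exists>L. levi_over F P L \<and> H \<subseteq> L"
    using assms(1) unfolding levi_over_def by blast
qed

lemma pgl_class_in_conj2E:
  assumes "pgl_class A \<in> pgl_class ` conj2 g S"
  obtains s c where "s \<in> S" and "c \<noteq> 0" and "A ** g = g ** smult_mat c s"
proof -
  obtain B s where "pgl_class A = pgl_class B" "s \<in> S" "B ** g = g ** s"
    using assms unfolding conj2_def by blast
  moreover from this(1) obtain c where "c \<noteq> 0" "A = smult_mat c B"
    using pgl_class_eqD by blast
  ultimately show thesis
    using that by simp
qed

lemma matrix_mult_lower_zero_nth1:
  fixes g :: "'a::comm_semiring_1 mat2"
  shows "M $ 2 $ 1 = 0 \<Longrightarrow> (g ** M) $ i $ 1 = M $ 1 $ 1 * g $ i $ 1"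
  by (simp add: matrix_matrix_mult_def sum_2 mult.commute)

lemma matrix_mult_upper_zero_nth2:
  fixes g :: "'a::comm_semiring_1 mat2"
  shows "M $ 1 $ 2 = 0 \<Longrightarrow> (g ** M) $ i $ 2 = M $ 2 $ 2 * g $ i $ 2"
  by (simp add: matrix_matrix_mult_def sum_2 mult.commute)

lemma conj_Borel2_eigencolumn:
  assumes "pgl_class A \<in> pgl_class ` conj2 g Borel2"
  obtains t where "\<And>i. (A ** g) $ i $ 1 = t * g $ i $ 1"
proof -
  obtain s c where "s \<in> Borel2" "A ** g = g ** smult_mat c s"
    using assms by (rule pgl_class_in_conj2E)
  then show thesis
    using that[of "c * s $ 1 $ 1"] by (simp add: Borel2_def matrix_mult_lower_zero_nth1)
qed

lemma conj_Torus2_eigencolumns: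
  assumes "pgl_class A \<in> pgl_class ` conj2 g Torus2"
  obtains t t' where "\<And>i. (A ** g) $ i $ 1 = t * g $ i $ 1"
    and "\<And>i. (A ** g) $ i $ 2 = t' * g $ i $ 2"
proof -
  obtain s c where "s \<in> Torus2" "A ** g = g ** smult_mat c s"
    using assms by (rule pgl_class_in_conj2E)
  then show thesis
    using that[of "c * s $ 1 $ 1" "c * s $ 2 $ 2"]
    by (simp add: Torus2_def matrix_mult_lower_zero_nth1 matrix_mult_upper_zero_nth2)
qed

lemma antidiag_eigencolumn:
  fixes g :: "'a::field mat2"
  assumes "\<And>i. (mat2 0 a 1 0 ** g) $ i $ j = t * g $ i $ j"
    and "g $ 1 $ j \<noteq> 0 \<or> g $ 2 $ j \<noteq> 0"
  shows "g $ 1 $ j = t * g $ 2 $ j" and "g $ 2 $ j \<noteq> 0" and "a = t\<^sup>2"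
proof -
  from assms(1)[of 1] assms(1)[of 2]
  have "a * g $ 2 $ j = t * g $ 1 $ j" and col: "g $ 1 $ j = t * g $ 2 $ j"
    by simp_all
  then have "(a - t\<^sup>2) * g $ 2 $ j = 0"
    by (simp add: power2_eq_square algebra_simps)
  moreover show "g $ 2 $ j \<noteq> 0"
    using assms(2) col by auto
  ultimately show "a = t\<^sup>2"
    by simp
  show "g $ 1 $ j = t * g $ 2 $ j"
    by (fact col)
qed

lemma mat2_column_nonzero:
  fixes g :: "'a::comm_ring_1 mat2"
  assumes "det g \<noteq> 0"
  shows "g $ 1 $ j \<noteq> 0 \<or> g $ 2 $ j \<noteq> 0"
proof -
  obtain p q r s where g: "g = mat2 p q r s"
    by (rule mat2_cases)
  have "j = 1 \<or> j = 2"
    by (rule exhaust_2)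
  then show ?thesis
    using assms by (auto simp: g det_mat2)
qed

lemma antidiag_notin_conj_Borel2:
  assumes k: "is_subfield k" and g: "g \<in> GL2 k" and a: "\<forall>y\<in>k. a \<noteq> y\<^sup>2"
  shows "pgl_class (mat2 0 a 1 0) \<notin> pgl_class ` conj2 g Borel2"
proof
  assume "pgl_class (mat2 0 a 1 0) \<in> pgl_class ` conj2 g Borel2"
  then obtain t where "\<And>i. (mat2 0 a 1 0 ** g) $ i $ 1 = t * g $ i $ 1"
    by (rule conj_Borel2_eigencolumn) blast
  moreover have "g $ 1 $ 1 \<noteq> 0 \<or> g $ 2 $ 1 \<noteq> 0"
    using g mat2_column_nonzero unfolding GL2_def by blast
  ultimately have t: "g $ 1 $ 1 = t * g $ 2 $ 1" "g $ 2 $ 1 \<noteq> 0" "a = t\<^sup>2"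
    by (rule antidiag_eigencolumn)+
  have "t = g $ 1 $ 1 * inverse (g $ 2 $ 1)"
    using t(1,2) by (simp add: field_simps)
  moreover have "g $ 1 $ 1 \<in> k" "g $ 2 $ 1 \<in> k"
    using g by (simp_all add: GL2_def)
  ultimately have "t \<in> k"
    using k unfolding is_subfield_def by metis
  with a t(3) show False
    by blast
qed

lemma antidiag_notin_conj_Torus2:
  fixes a :: "'a::field"
  assumes char2: "(2::'a) = 0" and h: "det h \<noteq> 0"
  shows "pgl_class (mat2 0 a 1 0) \<notin> pgl_class ` conj2 h Torus2"
proof
  assume "pgl_class (mat2 0 a 1 0) \<in> pgl_class ` conj2 h Torus2"
  then obtain t t' where eigen1: "\<And>i. (mat2 0 a 1 0 ** h) $ i $ 1 = t * h $ i $ 1"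
    and eigen2: "\<And>i. (mat2 0 a 1 0 ** h) $ i $ 2 = t' * h $ i $ 2"
    by (rule conj_Torus2_eigencolumns) blast
  have col1: "h $ 1 $ 1 = t * h $ 2 $ 1" "a = t\<^sup>2"
    using antidiag_eigencolumn(1,3)[OF eigen1 mat2_column_nonzero[OF h]] .
  have col2: "h $ 1 $ 2 = t' * h $ 2 $ 2" "a = t'\<^sup>2"
    using antidiag_eigencolumn(1,3)[OF eigen2 mat2_column_nonzero[OF h]] .
  \<comment> \<open>in characteristic 2, \<open>(t - t')\<^sup>2 = t\<^sup>2 - t'\<^sup>2\<close>\<close>
  have "(t - t')\<^sup>2 = 0"
    using col1(2) col2(2) char2
    by (simp add: power2_eq_square algebra_simps mult_2[symmetric])
  then have "t = t'"
    by simp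
  then have "det h = 0"
    using col1(1) col2(1) by (cases h rule: mat2_cases) (simp add: det_mat2)
  with h show False
    by contradiction
qed

lemma conj_Borel2_ne_PGL2:
  fixes g :: "'a::field mat2"
  assumes "det g \<noteq> 0"
  shows "pgl_class ` conj2 g Borel2 \<noteq> PGL2"
proof
  obtain x y z w where g: "g = mat2 x y z w"
    by (rule mat2_cases)
  define d where "d = x * w - y * z"
  have d: "d \<noteq> 0"
    using assms by (simp add: g d_def det_mat2)
  \<comment> \<open>\<open>A g\<close> is \<open>g\<close> with its columns swapped and scaled by \<open>d\<close>, so \<open>A\<close> moves
    the line spanned by the first column of \<open>g\<close>\<close>
  define A where "A = g ** mat2 0 1 1 0 ** mat2 w (- y) (- z) x"
  have "det A = - d * d"
    by (simp add: A_def g d_def det_mat2 mat2_mult algebra_simps)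
  moreover have Ag: "A ** g = smult_mat d (mat2 y x w z)"
    by (simp add: A_def g d_def mat2_mult smult_mat_mat2 mat2_eq_iff algebra_simps)
  moreover assume "pgl_class ` conj2 g Borel2 = PGL2"
  ultimately have "pgl_class A \<in> pgl_class ` conj2 g Borel2"
    using d by (simp add: pgl_class_in_PGL2)
  then obtain t where "\<And>i. (A ** g) $ i $ 1 = t * g $ i $ 1"
    by (rule conj_Borel2_eigencolumn) blast
  from this[of 1] this[of 2] have "d * y = t * x" "d * w = t * z"
    unfolding Ag by (simp_all add: g smult_mat_mat2)
  have "d * d = x * (d * w) - z * (d * y)"
    by (simp add: d_def algebra_simps)
  also have "\<dots> = 0"
    using \<open>d * y = t * x\<close> \<open>d * w = t * z\<close> by simp
  finally show False
    using d by simp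
qed

lemma pgl_one_in_conj_Borel2: "pgl_one \<in> pgl_class ` conj2 g Borel2"
proof -
  have "mat 1 \<in> Borel2"
    by (simp add: Borel2_def GL2_def mat_1_eq_mat2 det_mat2)
  then have "mat 1 \<in> conj2 g Borel2"
    unfolding conj2_def by force
  then show ?thesis
    unfolding pgl_one_def by blast
qed

lemma antidiag_in_conj_Borel2:
  fixes b :: "'a::field"
  assumes "b \<noteq> 0"
  shows "pgl_class (mat2 0 (b\<^sup>2) 1 0) \<in> pgl_class ` conj2 (mat2 b 1 1 0) Borel2"
proof -
  have "mat2 0 (b\<^sup>2) 1 0 ** mat2 b 1 1 0 = mat2 b 1 1 0 ** mat2 b 1 0 (- b)"
    by (simp add: mat2_mult power2_eq_square)
  moreover have "mat2 b 1 0 (- b) \<in> Borel2"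
    using assms by (simp add: Borel2_def GL2_def det_mat2)
  ultimately have "mat2 0 (b\<^sup>2) 1 0 \<in> conj2 (mat2 b 1 1 0) Borel2"
    unfolding conj2_def by blast
  then show ?thesis
    by blast
qed

lemma not_completely_reducible_antidiag:
  fixes a :: "'a::alg_closed_field"
  assumes char2: "(2::'a) = 0" and "a \<noteq> 0"
  shows "\<not> completely_reducible {pgl_one, pgl_class (mat2 0 a 1 0)}"
proof
  let ?U = "{pgl_one, pgl_class (mat2 0 a 1 0)}"
  obtain b where b: "b\<^sup>2 = a"
    using nth_root_exists[of 2 a] by auto
  with assms(2) have "b \<noteq> 0"
    by auto
  let ?P = "pgl_class ` conj2 (mat2 b 1 1 0) Borel2"
  have "mat2 b 1 1 0 \<in> GL2 UNIV"
    by (simp add: GL2_def det_mat2)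
  then have "parabolic_over UNIV ?P"
    unfolding parabolic_over_def by blast
  moreover have "?U \<subseteq> ?P"
    using pgl_one_in_conj_Borel2 antidiag_in_conj_Borel2[OF \<open>b \<noteq> 0\<close>] b by auto
  moreover assume "completely_reducible ?U"
  then have "parabolic_over UNIV ?P \<and> ?U \<subseteq> ?P \<longrightarrow> (\<exists>L. levi_over UNIV ?P L \<and> ?U \<subseteq> L)"
    unfolding completely_reducible_def cr_over_def by (rule spec)
  ultimately obtain L where L: "levi_over UNIV ?P L" "?U \<subseteq> L"
    by (meson conjI)
  have "?P \<noteq> PGL2"
    by (rule conj_Borel2_ne_PGL2) (simp add: det_mat2)
  with L(1) obtain h where h: "h \<in> GL2 UNIV" "L = pgl_class ` conj2 h Torus2"
    unfolding levi_over_def by blast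
  have "pgl_class (mat2 0 a 1 0) \<in> pgl_class ` conj2 h Torus2"
    using L(2) h(2) by blast
  moreover have "det h \<noteq> 0"
    using h(1) by (simp add: GL2_def)
  ultimately show False
    using antidiag_notin_conj_Torus2[OF char2] by blast
qed

theorem mainTheorem9:
  fixes k :: "'K::alg_closed_field set" and a :: 'K
  assumes "is_subfield k"
    and "\<forall>x::'K. algebraic_over k x"
    and "CHAR('K) = 2"
    and "\<exists>x\<in>k. \<forall>y\<in>k. x \<noteq> y ^ 2"
    and "a \<in> k" and "\<forall>y\<in>k. a \<noteq> y ^ 2"
  shows "irreducible_over k (pgl_generated {pgl_class (mat2 0 a 1 0)}) \<and>
         cr_over k (pgl_generated {pgl_class (mat2 0 a 1 0)}) \<and>
         \<not> completely_reducible (pgl_generated {pgl_class (mat2 0 a 1 0)})"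
proof -
  let ?U = "{pgl_one, pgl_class (mat2 0 a 1 0)}"
  have "0 \<in> k"
    using assms(1) by (simp add: is_subfield_def)
  with assms(6) have "a \<noteq> 0"
    by force
  have char2: "(2::'K) = 0"
    using assms(3) by (metis of_nat_numeral of_nat_eq_0_iff_char_dvd dvd_refl)
  have U: "pgl_generated {pgl_class (mat2 0 a 1 0)} = ?U"
    by (rule pgl_generated_involution[OF antidiag_squared \<open>a \<noteq> 0\<close>])
  have irreducible: "irreducible_over k ?U"
  proof (rule irreducible_overI)
    fix g assume "g \<in> GL2 k"
    then show "\<not> ?U \<subseteq> pgl_class ` conj2 g Borel2"
      using antidiag_notin_conj_Borel2[OF assms(1) _ assms(6)] by simp
  qed
  have "?U \<subseteq> PGL2"
    using pgl_subgroup_involution[OF antidiag_squared \<open>a \<noteq> 0\<close>]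
    by (simp add: pgl_subgroup_def)
  then have "cr_over k ?U"
    using irreducible by (rule irreducible_imp_cr_over)
  then show ?thesis
    unfolding U using irreducible not_completely_reducible_antidiag[OF char2 \<open>a \<noteq> 0\<close>]
    by simp
qed

end
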